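(* Let $\mathcal{D}$ be a DAG on vertex set $[p]$, let $\mathcal{V} \subseteq [p]$, and let $k \in \mathcal{V}$. If $F_{\mathcal{D}}(\mathcal{V}, k) > 0$, then $k \notin \mathrm{Maximal}(\mathcal{D}, \mathcal{V})$; equivalently, if no (proper) descendant of $k$ in $\mathcal{D}$ lies in $\mathcal{V}$, then $F_{\mathcal{D}}(\mathcal{V}, k) = 0$.
   Context: For a DAG $\mathcal{D}$ on $[p]$ and $i, j \in [p]$, $S \subseteq [p]\setminus\{i,j\}$, write $i \not\perp\!\!\!\perp_{\mathcal{D}} j \mid S$ if $i$ and $j$ are d-connected given $S$ in $\mathcal{D}$. For $\mathcal{V} \subseteq [p]$, the moral subgraph $\mathcal{M}_{\mathcal{V}}(\mathcal{D})$ is the undirected graph with vertex set $\mathcal{V}$ and edge set $\{ i - j : i \neq j \in \mathcal{V},\ i \not\perp\!\!\!\perp_{\mathcal{D}} j \mid \mathcal{V}\setminus\{i,j\}\}$. $\mathcal{G}[W]$ denotes the induced subgraph of an undirected graph $\mathcal{G}$ on $W$, and $\mathcal{V}\setminus k := \mathcal{V}\setminus\{k\}$. The fill edge set is $\mathcal{F}_{\mathcal{D}}(\mathcal{V}, k) = \mathcal{M}_{\mathcal{V}\setminus k}(\mathcal{D}) \setminus \mathcal{M}_{\mathcal{V}}(\mathcal{D})[\mathcal{V}\setminus k]$ and the fill score is $F_{\mathcal{D}}(\mathcal{V}, k) = |\mathcal{F}_{\mathcal{D}}(\mathcal{V}, k)|$. With $\mathrm{de}_{\mathcal{D}}(v)$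 the set of descendants of $v$ in $\mathcal{D}$ (nodes reachable from $v$ by a nonempty directed path, excluding $v$ itself), $\mathrm{Maximal}(\mathcal{D}, \mathcal{V}) := \{ v \in \mathcal{V} : \mathrm{de}_{\mathcal{D}}(v) \cap \mathcal{V} = \emptyset \}$. *)

theory Defs
  imports Main
begin

definition is_dag_on :: "nat \<Rightarrow> (nat \<times> nat) set \<Rightarrow> bool" where
  "is_dag_on p E \<longleftrightarrow> E \<subseteq> {1..p} \<times> {1..p} \<and> acyclic E"

definition descendants :: "(nat \<times> nat) set \<Rightarrow> nat \<Rightarrow> nat set" where
  "descendants E v = {u. (v, u) \<in> E\<^sup>+ \<and> u \<noteq> v}"

definition is_path :: "(nat \<times> nat) set \<Rightarrow> nat list \<Rightarrow> bool" where
  "is_path E xs \<longleftrightarrow> distinct xs \<and> length xs \<ge> 2 \<and>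
     (\<forall>m. Suc m < length xs \<longrightarrow> ((xs!m, xs!Suc m) \<in> E \<or> (xs!Suc m, xs!m) \<in> E))"

definition is_collider :: "(nat \<times> nat) set \<Rightarrow> nat list \<Rightarrow> nat \<Rightarrow> bool" where
  "is_collider E xs m \<longleftrightarrow> (xs!(m - 1), xs!m) \<in> E \<and> (xs!Suc m, xs!m) \<in> E"

definition active_path :: "(nat \<times> nat) set \<Rightarrow> nat set \<Rightarrow> nat list \<Rightarrow> bool" where
  "active_path E S xs \<longleftrightarrow> is_path E xs \<and>
     (\<forall>m. 0 < m \<and> Suc m < length xs \<longrightarrow>
        (if is_collider E xs m
         then xs!m \<in> S \<or> descendants E (xs!m) \<inter> S \<noteq> {}
         else xs!m \<notin> S))"

definition d_connected :: "(nat \<times> nat) set \<Rightarrow> nat \<Rightarrow> nat \<Rightarrow> nat set \<Rightarrow> bool" where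
  "d_connected E i j S \<longleftrightarrow>
     (\<exists>xs. active_path E S xs \<and> hd xs = i \<and> last xs = j)"

text \<open>Edge set of the moral subgraph M_V(D); undirected edges as 2-element sets.\<close>
definition moral_edges :: "(nat \<times> nat) set \<Rightarrow> nat set \<Rightarrow> nat set set" where
  "moral_edges E V = {{i, j} | i j. i \<in> V \<and> j \<in> V \<and> i \<noteq> j \<and> d_connected E i j (V - {i, j})}"

definition induced_edges :: "nat set set \<Rightarrow> nat set \<Rightarrow> nat set set" where
  "induced_edges G W = {e \<in> G. e \<subseteq> W}"

definition fill_edges :: "(nat \<times> nat) set \<Rightarrow> nat set \<Rightarrow> nat \<Rightarrow> nat set set" where
  "fill_edges E V k = moral_edges E (V - {k}) - induced_edges (moral_edges E V) (V - {k})"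

definition fill_score :: "(nat \<times> nat) set \<Rightarrow> nat set \<Rightarrow> nat \<Rightarrow> nat" where
  "fill_score E V k = card (fill_edges E V k)"

definition maximal_set :: "(nat \<times> nat) set \<Rightarrow> nat set \<Rightarrow> nat set" where
  "maximal_set E V = {v \<in> V. descendants E v \<inter> V = {}}"

end

theory Submission
  imports Defs
begin

text \<open>If \<open>k\<close> has no descendant in \<open>V\<close>, adding \<open>k\<close> to a conditioning set \<open>S \<subseteq> V\<close> blocks no
  path between \<open>i, j \<in> V\<close>: were \<open>k\<close> a non-collider on an active path, one of its path edges
  would point away from it, and following the path in that direction stays a directed path until
  it hits a collider (which lies in or has a descendant in \<open>S\<close>) or an endpoint. Either way \<open>k\<close>
  would have a descendant in \<open>V\<close>. Hence every edge of the moral graph on \<open>V - {k}\<close> is already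
  an edge of the moral graph on \<open>V\<close>, and there are no fill edges.\<close>

lemma is_collider_rev:
  assumes "0 < m" and "Suc m < length xs"
  shows "is_collider E (rev xs) m \<longleftrightarrow> is_collider E xs (length xs - Suc m)"
proof -
  have "rev xs ! (m - 1) = xs ! Suc (length xs - Suc m)"
    and "rev xs ! Suc m = xs ! (length xs - Suc m - 1)"
    and "rev xs ! m = xs ! (length xs - Suc m)"
    using assms by (simp_all add: rev_nth Suc_diff_Suc)
  then show ?thesis
    unfolding is_collider_def by auto
qed

lemma is_path_rev:
  assumes "is_path E xs"
  shows "is_path E (rev xs)"
proof -
  have "(rev xs ! m, rev xs ! Suc m) \<in> E \<or> (rev xs ! Suc m, rev xs ! m) \<in> E"
    if "Suc m < length xs" for m
  proof -
    have "Suc (length xs - Suc (Suc m)) < length xs"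
      and "rev xs ! m = xs ! Suc (length xs - Suc (Suc m))"
      and "rev xs ! Suc m = xs ! (length xs - Suc (Suc m))"
      using that by (simp_all add: rev_nth Suc_diff_Suc)
    then show ?thesis
      using assms unfolding is_path_def by metis
  qed
  then show ?thesis
    using assms unfolding is_path_def by simp
qed

lemma active_path_rev:
  assumes "active_path E S xs"
  shows "active_path E S (rev xs)"
proof -
  have "if is_collider E (rev xs) m
        then rev xs ! m \<in> S \<or> descendants E (rev xs ! m) \<inter> S \<noteq> {}
        else rev xs ! m \<notin> S"
    if "0 < m" and "Suc m < length xs" for m
  proof -
    have "0 < length xs - Suc m" and "Suc (length xs - Suc m) < length xs"
      and "rev xs ! m = xs ! (length xs - Suc m)"
      using that by (simp_all add: rev_nth)
    then show ?thesis
      using assms is_collider_rev[OF that] unfolding active_path_def by presburger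
  qed
  then show ?thesis
    using assms is_path_rev unfolding active_path_def by simp
qed

lemma active_path_forward_chain:
  assumes ap: "active_path E S xs" and m: "Suc m < length xs"
    and out: "(xs ! m, xs ! Suc m) \<in> E"
    and S_unreached: "\<forall>u\<in>S. (xs ! m, u) \<notin> E\<^sup>+"
  shows "m < n \<Longrightarrow> n < length xs \<Longrightarrow> (xs ! m, xs ! n) \<in> E\<^sup>+ \<and> (xs ! (n - 1), xs ! n) \<in> E"
proof (induction n)
  case 0
  then show ?case by simp
next
  case (Suc n)
  show ?case
  proof (cases "n = m")
    case True
    then show ?thesis using out by auto
  next
    case False
    with Suc.prems have "m < n" and "n < length xs" by auto
    with Suc.IH have reach: "(xs ! m, xs ! n) \<in> E\<^sup>+" and into: "(xs ! (n - 1), xs ! n) \<in> E"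
      by auto
    have "(xs ! Suc n, xs ! n) \<notin> E"
    proof
      assume "(xs ! Suc n, xs ! n) \<in> E"
      with into have "is_collider E xs n"
        unfolding is_collider_def by simp
      with ap \<open>m < n\<close> Suc.prems have "xs ! n \<in> S \<or> descendants E (xs ! n) \<inter> S \<noteq> {}"
        unfolding active_path_def by auto
      with reach S_unreached show False
        unfolding descendants_def by (auto dest: trancl_trans)
    qed
    with ap Suc.prems show ?thesis
      using reach unfolding active_path_def is_path_def by auto
  qed
qed

lemma active_path_noncollider_reaches:
  assumes ap: "active_path E S xs" and m: "0 < m" "Suc m < length xs"
    and "\<not> is_collider E xs m"
  shows "\<exists>u \<in> insert (hd xs) (insert (last xs) S). (xs ! m, u) \<in> E\<^sup>+"
proof -
  have reaches_last: "\<exists>u \<in> insert (last ys) S. (ys ! j, u) \<in> E\<^sup>+"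
    if "active_path E S ys" "Suc j < length ys" "(ys ! j, ys ! Suc j) \<in> E" for ys j
  proof (rule ccontr)
    assume "\<not> ?thesis"
    moreover have "last ys = ys ! (length ys - 1)"
      using that(2) by (intro last_conv_nth) auto
    moreover have "j < length ys - 1" and "length ys - 1 < length ys"
      using that(2) by simp_all
    ultimately show False
      using active_path_forward_chain[OF that, of "length ys - 1"] by simp
  qed
  have "Suc (m - 1) = m"
    using m by simp
  with ap m have "(xs ! m, xs ! Suc m) \<in> E \<or> (xs ! m, xs ! (m - 1)) \<in> E"
    using \<open>\<not> is_collider E xs m\<close>
    unfolding active_path_def is_path_def is_collider_def by (metis Suc_lessD)
  then show ?thesis
  proof
    assume "(xs ! m, xs ! Suc m) \<in> E"
    with reaches_last[OF ap m(2)] show ?thesis by auto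
  next
    assume backward: "(xs ! m, xs ! (m - 1)) \<in> E"
    define j where "j = length xs - Suc m"
    have "Suc j < length xs" and "rev xs ! j = xs ! m" and "rev xs ! Suc j = xs ! (m - 1)"
      using m by (simp_all add: j_def rev_nth Suc_diff_Suc)
    with reaches_last[OF active_path_rev[OF ap], of j] backward
    have "\<exists>u \<in> insert (hd xs) S. (xs ! m, u) \<in> E\<^sup>+"
      by (simp add: last_rev)
    then show ?thesis by auto
  qed
qed

lemma active_path_insert_nondescendant:
  assumes ap: "active_path E S xs" and "k \<notin> S" and "k \<noteq> hd xs" and "k \<noteq> last xs"
    and no_desc: "descendants E k \<inter> insert (hd xs) (insert (last xs) S) = {}"
  shows "active_path E (insert k S) xs"
proof -
  have "xs ! m \<noteq> k" if m: "0 < m" "Suc m < length xs" and "\<not> is_collider E xs m" for m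
  proof
    assume "xs ! m = k"
    with active_path_noncollider_reaches[OF ap that] obtain u
      where "u \<in> insert (hd xs) (insert (last xs) S)" and "(k, u) \<in> E\<^sup>+"
      by auto
    with assms show False
      unfolding descendants_def by auto
  qed
  with ap show ?thesis
    unfolding active_path_def by auto
qed

lemma d_connected_insert_nondescendant:
  assumes "d_connected E i j S" and "k \<notin> S" and "k \<noteq> i" and "k \<noteq> j"
    and "descendants E k \<inter> insert i (insert j S) = {}"
  shows "d_connected E i j (insert k S)"
  using assms active_path_insert_nondescendant unfolding d_connected_def by metis

lemma fill_edges_empty_if_no_descendants:
  assumes "k \<in> V" and "descendants E k \<inter> V = {}"
  shows "fill_edges E V k = {}"
proof -
  have "{i, j} \<in> moral_edges E V"
    if "i \<in> V - {k}" "j \<in> V - {k}" "i \<noteq> j" "d_connected E i j (V - {k} - {i, j})" for i j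
  proof -
    have "insert k (V - {k} - {i, j}) = V - {i, j}"
      using that assms(1) by auto
    with that assms d_connected_insert_nondescendant[of E i j "V - {k} - {i, j}" k]
    have "d_connected E i j (V - {i, j})"
      by auto
    with that show ?thesis
      unfolding moral_edges_def by auto
  qed
  then show ?thesis
    unfolding fill_edges_def induced_edges_def moral_edges_def by blast
qed

theorem proposition3:
  fixes p :: nat and E :: "(nat \<times> nat) set" and V :: "nat set" and k :: nat
  assumes "is_dag_on p E"
    and "V \<subseteq> {1..p}"
    and "k \<in> V"
    and "fill_score E V k > 0"
  shows "k \<notin> maximal_set E V"
proof
  assume "k \<in> maximal_set E V"
  then have "fill_edges E V k = {}"
    using fill_edges_empty_if_no_descendants[OF \<open>k \<in> V\<close>] unfolding maximal_set_def by auto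
  with \<open>fill_score E V k > 0\<close> show False
    unfolding fill_score_def by simp
qed

end
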